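(* Let $G=(V,E)$ be a finite simple undirected graph with distinct vertex IDs, whose neighborhood independence is at most a constant $c$, and let $K$ be a positive integer with $\delta(G)\ge K$. Suppose every vertex $v\in V$ selects the $K$ neighbors given by the operation $K$-Next-Modulo$(v,\Gamma(v),K)$. Then every vertex $v\in V$ is selected by at most $c\cdot K$ vertices.
   Context: $\Gamma(v)$ denotes the set of neighbors of $v$, $\deg(v)=|\Gamma(v)|$, and $\delta(G)=\min_{v}\deg(v)$. The neighborhood independence of $G$ is the maximum, over $v\in V$, of the size of an independent set of $G$ contained in $\Gamma(v)$. Operation $K$-Next-Modulo$(v,\Gamma(v),K)$: let $d=\deg(v)+1$ and let $u_1,u_2,\dots,u_d$ be the vertices of $\Gamma(v)\cup\{v\}$ listed in ascending order of ID, with $v=u_i$. Then $v$ selects the $K$ vertices $u_{i+1},u_{i+2},\dots,u_{i+K}$, indices taken cyclically modulo $d$; that is, the $K$ neighbors that immediately follow $v$ in the circular ordering of $\Gamma(v)\cup\{v\}$ by ID. All vertices make their selections simultaneously, in one round. *)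

theory Defs
  imports Main
begin

definition simple_graph :: "'a set \<Rightarrow> ('a \<Rightarrow> 'a \<Rightarrow> bool) \<Rightarrow> bool" where
  "simple_graph V E \<longleftrightarrow> finite V \<and> (\<forall>u v. E u v \<longrightarrow> u \<in> V \<and> v \<in> V)
     \<and> (\<forall>u v. E u v \<longrightarrow> E v u) \<and> (\<forall>v. \<not> E v v)"

definition nbhd :: "'a set \<Rightarrow> ('a \<Rightarrow> 'a \<Rightarrow> bool) \<Rightarrow> 'a \<Rightarrow> 'a set" where
  "nbhd V E v = {u \<in> V. E v u}"

definition deg :: "'a set \<Rightarrow> ('a \<Rightarrow> 'a \<Rightarrow> bool) \<Rightarrow> 'a \<Rightarrow> nat" where
  "deg V E v = card (nbhd V E v)"

definition min_degree :: "'a set \<Rightarrow> ('a \<Rightarrow> 'a \<Rightarrow> bool) \<Rightarrow> nat" where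
  "min_degree V E = Min (deg V E ` V)"

definition independent :: "('a \<Rightarrow> 'a \<Rightarrow> bool) \<Rightarrow> 'a set \<Rightarrow> bool" where
  "independent E S \<longleftrightarrow> (\<forall>u\<in>S. \<forall>w\<in>S. \<not> E u w)"

definition nbhd_indep_le :: "'a set \<Rightarrow> ('a \<Rightarrow> 'a \<Rightarrow> bool) \<Rightarrow> nat \<Rightarrow> bool" where
  "nbhd_indep_le V E c \<longleftrightarrow>
     (\<forall>v\<in>V. \<forall>S. S \<subseteq> nbhd V E v \<and> independent E S \<longrightarrow> card S \<le> c)"

(* Gamma(v) \<union> {v} listed in ascending order of ID *)
definition closed_nbhd_list ::
  "'a set \<Rightarrow> ('a \<Rightarrow> 'a \<Rightarrow> bool) \<Rightarrow> ('a \<Rightarrow> nat) \<Rightarrow> 'a \<Rightarrow> 'a list" where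
  "closed_nbhd_list V E ident v =
     (let N = insert v (nbhd V E v) in
      map (inv_into N ident) (sorted_list_of_set (ident ` N)))"

(* K-Next-Modulo(v, Gamma(v), K): the K vertices following v cyclically in that list *)
definition next_modulo ::
  "'a set \<Rightarrow> ('a \<Rightarrow> 'a \<Rightarrow> bool) \<Rightarrow> ('a \<Rightarrow> nat) \<Rightarrow> nat \<Rightarrow> 'a \<Rightarrow> 'a set" where
  "next_modulo V E ident K v =
     (let xs = closed_nbhd_list V E ident v; d = length xs; i = (THE i. i < d \<and> xs ! i = v) in
      {xs ! ((i + j) mod d) | j. 1 \<le> j \<and> j \<le> K})"

end

(* Fix v and let S be the set of vertices selecting v; S lies in the neighbourhood of v.
   Rank S cyclically by ID, starting just after v. If u in S has a neighbour w in S of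
   larger rank, then w lies strictly between u and v in the cyclic ID order of u's closed
   neighbourhood, so u selected w before reaching v: every u in S has fewer than K
   neighbours of larger rank. Repeatedly taking the vertex of least rank and discarding its
   neighbours therefore yields an independent subset of S of size at least |S| / K. It lies
   in the neighbourhood of v, so it has at most c elements, whence |S| <= c K. *)

theory Submission
  imports Defs "HOL-Library.Product_Lexorder"
begin

(* Running upwards from a and wrapping around, x is met strictly after a and strictly before b. *)
definition cyclic_between :: "nat \<Rightarrow> nat \<Rightarrow> nat \<Rightarrow> bool" where
  "cyclic_between a b x \<longleftrightarrow> (a < x \<and> x < b) \<or> (b < a \<and> (a < x \<or> x < b))"

lemma cyclic_between_strict_mono_on:
  assumes "strict_mono_on A g" "a \<in> A" "b \<in> A" "x \<in> A"
  shows "cyclic_between (g a) (g b) (g x) \<longleftrightarrow> cyclic_between a b x"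
  using assms by (simp add: cyclic_between_def strict_mono_on_less)

lemma cyclic_between_mod_offset:
  fixes d i j p :: nat
  assumes "i < d" "j < d" "p < d" "cyclic_between i ((i + j) mod d) p"
  shows "\<exists>t\<in>{1..<j}. p = (i + t) mod d"
proof (cases "i + j < d")
  case True
  then have "i < p" "p < i + j" using assms(4) by (auto simp: cyclic_between_def)
  then show ?thesis using assms(3) by (intro bexI[of _ "p - i"]) auto
next
  case False
  then have wrap: "(i + j) mod d = i + j - d"
    using assms(1,2) by (simp add: mod_if)
  show ?thesis
  proof (cases "i < p")
    case True
    then show ?thesis using False assms(3) by (intro bexI[of _ "p - i"]) auto
  next
    case False
    then have "p < i + j - d" using assms(4) wrap by (auto simp: cyclic_between_def)
    then show ?thesis using assms(1,3) \<open>\<not> i + j < d\<close>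
      by (intro bexI[of _ "p + d - i"]) (auto simp: mod_if)
  qed
qed

lemma card_cyclic_between_nth_less:
  fixes f :: "'a \<Rightarrow> nat"
  assumes sorted: "sorted_wrt (<) (map f xs)" and "i < length xs" "0 < j" "j < length xs"
  shows "card {x \<in> set xs. cyclic_between (f (xs ! i)) (f (xs ! ((i + j) mod length xs))) (f x)} < j"
    (is "card ?B < j")
proof -
  define d where "d = length xs"
  have mono: "strict_mono_on {..<d} (\<lambda>k. f (xs ! k))"
    using sorted_wrt_nth_less[OF sorted] unfolding d_def by (intro strict_mono_onI) auto
  have "?B \<subseteq> (\<lambda>t. xs ! ((i + t) mod d)) ` {1..<j}"
  proof
    fix x assume x: "x \<in> ?B"
    then obtain p where p: "p < d" "x = xs ! p" unfolding d_def by (auto simp: in_set_conv_nth)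
    have "(i + j) mod d < d" unfolding d_def by (rule mod_less_divisor) (use assms(2) in linarith)
    then have "cyclic_between i ((i + j) mod d) p"
      using x p assms(2) cyclic_between_strict_mono_on[OF mono] unfolding d_def by auto
    then obtain t where "t \<in> {1..<j}" "p = (i + t) mod d"
      using cyclic_between_mod_offset assms(2,4) p(1) unfolding d_def by blast
    then show "x \<in> (\<lambda>t. xs ! ((i + t) mod d)) ` {1..<j}" using p by auto
  qed
  then have "card ?B \<le> card ((\<lambda>t. xs ! ((i + t) mod d)) ` {1..<j})"
    by (intro card_mono) auto
  also have "\<dots> \<le> card {1..<j}" by (rule card_image_le) simp
  also have "\<dots> < j" using assms(3) by simp
  finally show ?thesis .
qed

(* Orders the naturals cyclically, starting just above a and ending with a. *)
definition cyclic_rank :: "nat \<Rightarrow> nat \<Rightarrow> bool \<times> nat" where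
  "cyclic_rank a x = (x \<le> a, x)"

lemma inj_cyclic_rank: "inj (cyclic_rank a)"
  by (auto intro: injI simp: cyclic_rank_def)

lemma cyclic_between_of_cyclic_rank_less:
  assumes "x \<noteq> a" "y \<noteq> a" "cyclic_rank a x < cyclic_rank a y"
  shows "cyclic_between x a y"
  using assms by (auto simp: cyclic_between_def cyclic_rank_def)

(* Greedy: the vertex of least rank has fewer than K neighbours; keep it, drop them, recurse. *)
lemma independent_subset_of_ranked_graph:
  fixes r :: "'a \<Rightarrow> 'b::linorder"
  assumes "finite T" "inj_on r T"
    and irrefl: "\<And>x. \<not> E x x" and sym: "\<And>x y. E x y \<Longrightarrow> E y x"
    and "\<And>u. u \<in> T \<Longrightarrow> card {w \<in> T. E u w \<and> r u < r w} < K"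
  shows "\<exists>I\<subseteq>T. independent E I \<and> card T \<le> K * card I"
  using assms(1,2,5)
proof (induction T rule: finite_psubset_induct)
  case (psubset T)
  show ?case
  proof (cases "T = {}")
    case True
    then show ?thesis unfolding independent_def by auto
  next
    case False
    define u where "u = arg_min_on r T"
    have u: "u \<in> T" and u_min: "\<And>w. w \<in> T \<Longrightarrow> \<not> r w < r u"
      using arg_min_if_finite[OF psubset.hyps False, of r] unfolding u_def by auto
    define N where "N = {w \<in> T. E u w}"
    have "r u < r w" if "w \<in> T" "E u w" for w
    proof -
      have "w \<noteq> u" using that(2) irrefl by auto
      then have "r w \<noteq> r u" using inj_on_eq_iff[OF psubset.prems(1) that(1) u] by simp
      then show ?thesis using u_min[OF that(1)] by simp
    qed
    then have "N = {w \<in> T. E u w \<and> r u < r w}" unfolding N_def by auto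
    then have "card N < K" using psubset.prems(2) u by simp
    moreover have "finite N" using psubset.hyps unfolding N_def by simp
    ultimately have card_uN: "card (insert u N) \<le> K" by (simp add: card_insert_if)
    define T' where "T' = T - insert u N"
    have "\<exists>I\<subseteq>T'. independent E I \<and> card T' \<le> K * card I"
    proof (rule psubset.IH)
      show "T' \<subset> T" using u unfolding T'_def by auto
      show "inj_on r T'" using psubset.prems(1) unfolding T'_def by (rule inj_on_subset) auto
    next
      fix x assume "x \<in> T'"
      have "card {w \<in> T'. E x w \<and> r x < r w} \<le> card {w \<in> T. E x w \<and> r x < r w}"
        using psubset.hyps by (intro card_mono) (auto simp: T'_def)
      also have "\<dots> < K" using psubset.prems(2) \<open>x \<in> T'\<close> unfolding T'_def by auto
      finally show "card {w \<in> T'. E x w \<and> r x < r w} < K" .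
    qed
    then obtain I where I: "I \<subseteq> T'" "independent E I" "card T' \<le> K * card I"
      by blast
    have "\<not> E u y \<and> \<not> E y u" if "y \<in> I" for y
      using that I(1) sym[of y u] unfolding T'_def N_def by auto
    then have "independent E (insert u I)"
      using I(2) irrefl unfolding independent_def by auto
    moreover have "card T = card T' + card (insert u N)"
    proof -
      have sub: "insert u N \<subseteq> T" using u unfolding N_def by auto
      have "finite (insert u N)" using sub psubset.hyps by (rule finite_subset)
      then show ?thesis
        using card_Diff_subset[OF _ sub] card_mono[OF psubset.hyps sub] unfolding T'_def by simp
    qed
    moreover have "card (insert u I) = Suc (card I)"
    proof -
      have "finite I" using I(1) psubset.hyps unfolding T'_def by (meson finite_Diff finite_subset)
      moreover have "u \<notin> I" using I(1) unfolding T'_def by auto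
      ultimately show ?thesis by simp
    qed
    ultimately show ?thesis
      using u I(1,3) card_uN unfolding T'_def by (intro exI[of _ "insert u I"]) auto
  qed
qed

lemma sorted_list_of_image_inv_into:
  assumes "finite N" "inj_on f N"
  shows "map f (map (inv_into N f) (sorted_list_of_set (f ` N))) = sorted_list_of_set (f ` N)"
    and "set (map (inv_into N f) (sorted_list_of_set (f ` N))) = N"
  using assms by (auto intro: map_idI simp: f_inv_into_f inv_into_image_cancel)

lemma closed_nbhd_list_set_sorted:
  assumes "simple_graph V E" "inj_on ident V" "u \<in> V"
  shows "set (closed_nbhd_list V E ident u) = insert u (nbhd V E u)"
    and "sorted_wrt (<) (map ident (closed_nbhd_list V E ident u))"
proof -
  have sub: "insert u (nbhd V E u) \<subseteq> V" using assms(3) unfolding nbhd_def by auto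
  have fin: "finite (insert u (nbhd V E u))"
    using assms(1) finite_subset[OF sub] unfolding simple_graph_def by simp
  have inj: "inj_on ident (insert u (nbhd V E u))" using assms(2) sub by (rule inj_on_subset)
  show "set (closed_nbhd_list V E ident u) = insert u (nbhd V E u)"
    unfolding closed_nbhd_list_def Let_def by (rule sorted_list_of_image_inv_into(2)[OF fin inj])
  have "map ident (closed_nbhd_list V E ident u) = sorted_list_of_set (ident ` insert u (nbhd V E u))"
    unfolding closed_nbhd_list_def Let_def by (rule sorted_list_of_image_inv_into(1)[OF fin inj])
  then show "sorted_wrt (<) (map ident (closed_nbhd_list V E ident u))" by simp
qed

lemma next_modulo_memD:
  assumes "simple_graph V E" "inj_on ident V" "u \<in> V" "K \<le> deg V E u"
    and "v \<in> next_modulo V E ident K u"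
  shows "E u v"
    and "card {w \<in> nbhd V E u. cyclic_between (ident u) (ident v) (ident w)} < K"
proof -
  define xs where "xs = closed_nbhd_list V E ident u"
  define d where "d = length xs"
  define i where "i = (THE i. i < d \<and> xs ! i = u)"
  have set_xs: "set xs = insert u (nbhd V E u)" and sorted: "sorted_wrt (<) (map ident xs)"
    using closed_nbhd_list_set_sorted[OF assms(1-3)] unfolding xs_def by auto
  have "distinct xs" using sorted by (simp add: strict_sorted_iff distinct_map)
  have "u \<notin> nbhd V E u" "finite (nbhd V E u)"
    using assms(1) unfolding simple_graph_def nbhd_def by auto
  then have "d = Suc (deg V E u)"
    using distinct_card[OF \<open>distinct xs\<close>] set_xs unfolding d_def deg_def by simp
  with assms(4) have "K < d" by simp
  have i: "i < d" "xs ! i = u"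
    using theI'[OF distinct_Ex1[OF \<open>distinct xs\<close>, of u]] set_xs unfolding i_def d_def by auto
  obtain j where j: "1 \<le> j" "j \<le> K" "v = xs ! ((i + j) mod d)"
    using assms(5) unfolding next_modulo_def Let_def by (auto simp: xs_def d_def i_def)
  have "(i + j) mod d \<noteq> i" using i(1) j(1,2) \<open>K < d\<close> by (auto simp: mod_if)
  moreover have "(i + j) mod d < d" using i(1) by simp
  ultimately have "v \<noteq> u"
    using j(3) i nth_eq_iff_index_eq[OF \<open>distinct xs\<close>] unfolding d_def by metis
  moreover have "v \<in> set xs" using j(3) \<open>(i + j) mod d < d\<close> unfolding d_def by simp
  ultimately show "E u v" using set_xs unfolding nbhd_def by auto
  have "{w \<in> nbhd V E u. cyclic_between (ident u) (ident v) (ident w)}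
      \<subseteq> {x \<in> set xs. cyclic_between (ident (xs ! i)) (ident (xs ! ((i + j) mod d))) (ident x)}"
    using set_xs i(2) j(3) by auto
  then have "card {w \<in> nbhd V E u. cyclic_between (ident u) (ident v) (ident w)}
      \<le> card {x \<in> set xs. cyclic_between (ident (xs ! i)) (ident (xs ! ((i + j) mod d))) (ident x)}"
    by (intro card_mono) auto
  also have "\<dots> < j"
    using card_cyclic_between_nth_less[OF sorted] i(1) j(1,2) \<open>K < d\<close> unfolding d_def by simp
  finally show "card {w \<in> nbhd V E u. cyclic_between (ident u) (ident v) (ident w)} < K"
    using j(2) by simp
qed

lemma min_degree_le_deg:
  assumes "finite V" "u \<in> V"
  shows "min_degree V E \<le> deg V E u"
  unfolding min_degree_def using assms by simp

definition selectors :: "'a set \<Rightarrow> ('a \<Rightarrow> 'a \<Rightarrow> bool) \<Rightarrow> ('a \<Rightarrow> nat) \<Rightarrow> nat \<Rightarrow> 'a \<Rightarrow> 'a set" where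
  "selectors V E ident K v = {u \<in> V. v \<in> next_modulo V E ident K u}"

lemma selectors_subset_nbhd:
  assumes "simple_graph V E" "inj_on ident V" "K \<le> min_degree V E"
  shows "selectors V E ident K v \<subseteq> nbhd V E v"
proof
  fix u assume "u \<in> selectors V E ident K v"
  then have u: "u \<in> V" "v \<in> next_modulo V E ident K u" unfolding selectors_def by auto
  have "finite V" using assms(1) unfolding simple_graph_def by simp
  then have "K \<le> deg V E u" using assms(3) min_degree_le_deg[OF _ u(1)] by (meson le_trans)
  then have "E u v" using next_modulo_memD(1)[OF assms(1,2) u(1) _ u(2)] by simp
  then have "E v u" using assms(1) unfolding simple_graph_def by blast
  then show "u \<in> nbhd V E v" using u(1) unfolding nbhd_def by simp
qed

lemma card_later_selector_neighbours_less:
  assumes "simple_graph V E" "inj_on ident V" "K \<le> min_degree V E"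
    and "v \<in> V" "u \<in> selectors V E ident K v"
  shows "card {w \<in> selectors V E ident K v. E u w \<and>
      cyclic_rank (ident v) (ident u) < cyclic_rank (ident v) (ident w)} < K"
    (is "card ?L < K")
proof -
  let ?S = "selectors V E ident K v"
  have fin: "finite V" and irrefl: "\<And>x. \<not> E x x"
    using assms(1) unfolding simple_graph_def by auto
  have u: "u \<in> V" "v \<in> next_modulo V E ident K u"
    using assms(5) unfolding selectors_def by auto
  have ident_ne: "ident w \<noteq> ident v" if "w \<in> ?S" for w
  proof -
    have "w \<in> V" "w \<noteq> v"
      using that selectors_subset_nbhd[OF assms(1-3)] irrefl unfolding nbhd_def by auto
    then show ?thesis using inj_on_eq_iff[OF assms(2)] assms(4) by blast
  qed
  have "?L \<subseteq> {w \<in> nbhd V E u. cyclic_between (ident u) (ident v) (ident w)}"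
  proof
    fix w assume w: "w \<in> ?L"
    then have "cyclic_between (ident u) (ident v) (ident w)"
      using cyclic_between_of_cyclic_rank_less[OF ident_ne[OF assms(5)] ident_ne[of w]] by simp
    moreover have "w \<in> V" using w unfolding selectors_def by simp
    ultimately show "w \<in> {w \<in> nbhd V E u. cyclic_between (ident u) (ident v) (ident w)}"
      using w unfolding nbhd_def by simp
  qed
  then have "card ?L \<le> card {w \<in> nbhd V E u. cyclic_between (ident u) (ident v) (ident w)}"
    using fin by (intro card_mono) (auto simp: nbhd_def)
  also have "\<dots> < K"
    using next_modulo_memD(2)[OF assms(1,2) u(1) _ u(2)] min_degree_le_deg[OF fin u(1), of E]
      assms(3)
    by linarith
  finally show ?thesis .
qed

theorem theorem1:
  fixes V :: "'a set" and E :: "'a \<Rightarrow> 'a \<Rightarrow> bool" and ident :: "'a \<Rightarrow> nat"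
    and c K :: nat
  assumes "simple_graph V E"
    and "V \<noteq> {}"
    and "inj_on ident V"
    and "nbhd_indep_le V E c"
    and "K > 0"
    and "min_degree V E \<ge> K"
  shows "\<forall>v\<in>V. card {u \<in> V. v \<in> next_modulo V E ident K u} \<le> c * K"
proof
  fix v assume v: "v \<in> V"
  let ?S = "selectors V E ident K v"
  have fin: "finite V" and irrefl: "\<And>x. \<not> E x x" and sym: "\<And>x y. E x y \<Longrightarrow> E y x"
    using assms(1) unfolding simple_graph_def by auto
  have "finite ?S" using fin unfolding selectors_def by simp
  moreover have "inj_on (\<lambda>w. cyclic_rank (ident v) (ident w)) ?S"
  proof -
    have "inj_on ident ?S" using assms(3) by (rule inj_on_subset) (auto simp: selectors_def)
    then have "inj_on (cyclic_rank (ident v) \<circ> ident) ?S"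
      by (rule comp_inj_on) (rule inj_on_subset[OF inj_cyclic_rank subset_UNIV])
    then show ?thesis by (simp only: comp_def)
  qed
  ultimately have "\<exists>I\<subseteq>?S. independent E I \<and> card ?S \<le> K * card I"
    by (rule independent_subset_of_ranked_graph[where r = "\<lambda>w. cyclic_rank (ident v) (ident w)",
          OF _ _ irrefl sym card_later_selector_neighbours_less[OF assms(1,3,6) v]])
  then obtain I where I: "I \<subseteq> ?S" "independent E I" "card ?S \<le> K * card I"
    by blast
  have "card I \<le> c"
    using assms(4) v I(1,2) selectors_subset_nbhd[OF assms(1,3,6)] unfolding nbhd_indep_le_def by blast
  then have "card ?S \<le> K * c" using I(3) mult_le_mono2 le_trans by blast
  then show "card {u \<in> V. v \<in> next_modulo V E ident K u} \<le> c * K"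
    unfolding selectors_def by (simp add: mult.commute)
qed

end
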